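(* Let $3/2<s<3$ and $M\ge0$. There exists $C_s>0$ such that for every integer $N\ge1$ and every mean-zero divergence-free field $u$ on $\mathbb T^3$ with $\|u\|_{H^s}\le M$, and every orbit $\alpha\in\mathcal O_N$ with representative $k_\alpha$, \[ \sum_{\beta\in\mathcal O_N}|M_{\alpha\beta}(u)|\le C_sM^3\bigl(|k_\alpha|^{2-s}+|k_\alpha|^{6-3s}\bigr). \] Consequently \[ \sup_{\alpha\in\mathcal O_N}\sum_{\beta\in\mathcal O_N}|M_{\alpha\beta}(u)|\le\begin{cases}C_sM^3,&2<s<3,\\ C_sM^3N^{6-3s},&3/2<s\le2.\end{cases} \]
   Context: $\mathbb T^3=[0,2\pi]^3$; $u(x)=\sum_{k\ne0}\hat u_ke^{ik\cdot x}$, $\hat u_k\in\mathbb C^3$, divergence-free meaning $k\cdot\hat u_k=0$, reality $\hat u_{-k}=\overline{\hat u_k}$, and $\|u\|_{H^s}^2:=\sum_{k\ne0}|k|^{2s}|\hat u_k|^2$ ($|\cdot|$ Euclidean). $\Lambda_N:=\{k\in\mathbb Z^3\setminus\{0\}:|k|_\infty\le N\}$; $O_h$ is the group of 48 signed coordinate permutations, $\mathcal O_N:=\Lambda_N/O_h$, $|\alpha|$ the orbit cardinality. $P(k):=I-\frac{k\otimes k}{|k|^2}$; for $a,b\in\mathbb C^3$, $a\cdot b:=\sum_ja_jb_j$. \[ M_{\alpha\beta}(u):=\frac{1}{|\alpha|}\sum_{k\in\alpha}\sum_{\substack{p\in\beta\\ q=k-p\in\Lambda_N}}|k|^2\,\mathrm{Re}\Bigl(\overline{\hat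 u_k}\cdot\bigl[-iP(k)\bigl(q(\hat u_p\cdot\hat u_q)\bigr)\bigr]\Bigr). \] *)

theory Defs
  imports "HOL-Analysis.Analysis"
begin

text \<open>Lattice points of Z^3 are vectors of type int^3; Fourier coefficients are
  vectors of type complex^3.  A velocity field u on T^3 is represented by its
  Fourier coefficient map k |-> u_k.\<close>

type_synonym lat = "int ^ 3"
type_synonym coeffs = "int ^ 3 \<Rightarrow> complex ^ 3"

definition rvec :: "lat \<Rightarrow> real ^ 3" where
  "rvec k = (\<chi> i. real_of_int (k $ i))"

definition cvec :: "lat \<Rightarrow> complex ^ 3" where
  "cvec k = (\<chi> i. complex_of_int (k $ i))"

definition knorm :: "lat \<Rightarrow> real" where
  "knorm k = norm (rvec k)"

definition bdot :: "complex ^ 3 \<Rightarrow> complex ^ 3 \<Rightarrow> complex" where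
  "bdot a b = (\<Sum>j\<in>UNIV. a $ j * b $ j)"

definition leray :: "lat \<Rightarrow> complex ^ 3 \<Rightarrow> complex ^ 3" where
  "leray k w = w - (bdot (cvec k) w / complex_of_real ((knorm k)\<^sup>2)) *s cvec k"

definition mean_zero_div_free_real :: "coeffs \<Rightarrow> bool" where
  "mean_zero_div_free_real u \<longleftrightarrow>
     u 0 = 0 \<and>
     (\<forall>k. bdot (cvec k) (u k) = 0) \<and>
     (\<forall>k. u (- k) = (\<chi> j. cnj (u k $ j)))"

definition Hs_term :: "real \<Rightarrow> coeffs \<Rightarrow> lat \<Rightarrow> real" where
  "Hs_term s u k = knorm k powr (2 * s) * (norm (u k))\<^sup>2"

definition in_Hs :: "real \<Rightarrow> coeffs \<Rightarrow> bool" where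
  "in_Hs s u \<longleftrightarrow> Hs_term s u summable_on (UNIV - {0})"

definition Hs_norm :: "real \<Rightarrow> coeffs \<Rightarrow> real" where
  "Hs_norm s u = sqrt (infsum (Hs_term s u) (UNIV - {0}))"

definition Lambda :: "nat \<Rightarrow> lat set" where
  "Lambda N = {k. k \<noteq> 0 \<and> (\<forall>i. \<bar>k $ i\<bar> \<le> int N)}"

definition Oh :: "(lat \<Rightarrow> lat) set" where
  "Oh = {g. \<exists>\<sigma> \<epsilon>. \<sigma> permutes (UNIV :: 3 set) \<and> (\<forall>i. \<epsilon> i \<in> {-1, 1 :: int}) \<and>
              g = (\<lambda>k. \<chi> i. \<epsilon> i * k $ \<sigma> i)}"

definition orbit :: "lat \<Rightarrow> lat set" where
  "orbit k = {g k | g. g \<in> Oh}"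

definition Orbits :: "nat \<Rightarrow> lat set set" where
  "Orbits N = orbit ` Lambda N"

definition Mab :: "nat \<Rightarrow> coeffs \<Rightarrow> lat set \<Rightarrow> lat set \<Rightarrow> real" where
  "Mab N u \<alpha> \<beta> = (1 / real (card \<alpha>)) *
     (\<Sum>k\<in>\<alpha>. \<Sum>p\<in>{p \<in> \<beta>. k - p \<in> Lambda N}.
        (knorm k)\<^sup>2 *
        Re (bdot (\<chi> j. cnj (u k $ j))
                 (- \<i> *s leray k (bdot (u p) (u (k - p)) *s cvec (k - p)))))"

end

theory Submission
  imports Defs
begin

(* In fact sum_beta |M_ab(u)| <= ||u||_{H^s}^3 |k_a|^(2-s) for every s >= 1, which gives both
   bounds.  Since u_k is orthogonal to k, the Leray projector P(k) can be dropped against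
   conj(u_k), so each triad term is at most |k|^2 |u_k| |u_p| |k-p| |u_(k-p)|.  Distinct
   orbits are disjoint, so summing over beta merges the sums over p in beta into one lattice
   sum; by AM-GM it is at most (||u||_{L^2}^2 + ||u||_{H^1}^2) / 2 <= ||u||_{H^s}^2.  Finally
   |k|^2 |u_k| <= |k|^(2-s) ||u||_{H^s}, and |k| <= 3N on Lambda_N controls the supremum. *)

lemma Oh_id: "(\<lambda>k. k) \<in> Oh"
  unfolding Oh_def
  by (intro CollectI exI[of _ id] exI[of _ "\<lambda>_. 1"]) (auto simp: permutes_id vec_eq_iff)

lemma OhE:
  assumes "g \<in> Oh"
  obtains \<sigma> \<epsilon> where "\<sigma> permutes (UNIV :: 3 set)" "\<And>i. \<epsilon> i \<in> {-1, 1 :: int}"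
    "g = (\<lambda>k. \<chi> i. \<epsilon> i * k $ \<sigma> i)"
  using assms unfolding Oh_def by blast

lemma Oh_comp:
  assumes "g \<in> Oh" "h \<in> Oh"
  shows "g \<circ> h \<in> Oh"
proof -
  obtain \<sigma> \<epsilon> where g: "\<sigma> permutes UNIV" "\<And>i. \<epsilon> i \<in> {-1, 1 :: int}"
    "g = (\<lambda>k. \<chi> i. \<epsilon> i * k $ \<sigma> i)" using assms(1) by (rule OhE) blast
  obtain \<tau> \<delta> where h: "\<tau> permutes UNIV" "\<And>i. \<delta> i \<in> {-1, 1 :: int}"
    "h = (\<lambda>k. \<chi> i. \<delta> i * k $ \<tau> i)" using assms(2) by (rule OhE) blast
  have "g \<circ> h = (\<lambda>k. \<chi> i. (\<epsilon> i * \<delta> (\<sigma> i)) * k $ (\<tau> \<circ> \<sigma>) i)"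
    by (simp add: g(3) h(3) comp_def mult.assoc)
  moreover have "\<epsilon> i * \<delta> (\<sigma> i) \<in> {-1, 1}" for i
    using g(2)[of i] h(2)[of "\<sigma> i"] by auto
  ultimately show ?thesis
    unfolding Oh_def using permutes_compose[OF g(1) h(1)]
    by (intro CollectI exI[of _ "\<tau> \<circ> \<sigma>"] exI[of _ "\<lambda>i. \<epsilon> i * \<delta> (\<sigma> i)"]) blast
qed

lemma Oh_inverse:
  assumes "g \<in> Oh"
  obtains h where "h \<in> Oh" "\<And>k. h (g k) = k"
proof -
  obtain \<sigma> \<epsilon> where g: "\<sigma> permutes UNIV" "\<And>i. \<epsilon> i \<in> {-1, 1 :: int}"
    "g = (\<lambda>k. \<chi> i. \<epsilon> i * k $ \<sigma> i)" using assms by (rule OhE) blast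
  define h where "h = (\<lambda>k::lat. \<chi> i. \<epsilon> (inv \<sigma> i) * k $ inv \<sigma> i)"
  have "h \<in> Oh"
    unfolding Oh_def h_def using g permutes_inv[OF g(1)]
    by (intro CollectI exI[of _ "inv \<sigma>"] exI[of _ "\<lambda>i. \<epsilon> (inv \<sigma> i)"]) auto
  moreover have "h (g k) = k" for k
  proof -
    have "\<epsilon> i * \<epsilon> i = 1" for i using g(2)[of i] by auto
    then show ?thesis
      by (simp add: h_def g(3) vec_eq_iff permutes_inverses(1)[OF g(1)] mult.assoc[symmetric])
  qed
  ultimately show ?thesis by (rule that)
qed

lemma orbit_refl: "k \<in> orbit k"
  unfolding orbit_def using Oh_id by force

lemma orbit_eq:
  assumes "p \<in> orbit k"
  shows "orbit p = orbit k"
proof -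
  obtain g where g: "g \<in> Oh" "p = g k" using assms unfolding orbit_def by blast
  obtain h where h: "h \<in> Oh" "\<And>k. h (g k) = k" using g(1) by (rule Oh_inverse) blast
  have "orbit p \<subseteq> orbit k"
    unfolding orbit_def g(2) using Oh_comp[OF _ g(1)] by (force simp: comp_def)
  moreover have "orbit k \<subseteq> orbit p"
  proof
    fix x assume "x \<in> orbit k"
    then obtain f where "f \<in> Oh" "x = f k" unfolding orbit_def by blast
    then have "f \<circ> h \<in> Oh" "x = (f \<circ> h) p" using Oh_comp h by (auto simp: g(2))
    then show "x \<in> orbit p" unfolding orbit_def by blast
  qed
  ultimately show ?thesis by blast
qed

lemma Orbits_disjoint:
  assumes "\<beta> \<in> Orbits N" "\<gamma> \<in> Orbits N" "\<beta> \<noteq> \<gamma>"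
  shows "\<beta> \<inter> \<gamma> = {}"
  using assms orbit_eq unfolding Orbits_def by blast

lemma knorm_eq_sqrt: "knorm k = sqrt (\<Sum>i\<in>UNIV. (real_of_int (k $ i))\<^sup>2)"
  by (simp add: knorm_def norm_vec_def L2_set_def rvec_def)

lemma knorm_Oh:
  assumes "g \<in> Oh"
  shows "knorm (g k) = knorm k"
proof -
  obtain \<sigma> \<epsilon> where g: "\<sigma> permutes UNIV" "\<And>i. \<epsilon> i \<in> {-1, 1 :: int}"
    "g = (\<lambda>k. \<chi> i. \<epsilon> i * k $ \<sigma> i)" using assms by (rule OhE) blast
  have "(real_of_int (\<epsilon> i * x))\<^sup>2 = (real_of_int x)\<^sup>2" for i x
    using g(2)[of i] by auto
  then have "(\<Sum>i\<in>UNIV. (real_of_int (g k $ i))\<^sup>2) = (\<Sum>i\<in>UNIV. (real_of_int (k $ \<sigma> i))\<^sup>2)"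
    by (simp add: g(3))
  also have "\<dots> = (\<Sum>i\<in>UNIV. (real_of_int (k $ i))\<^sup>2)"
    using sum.permute[OF g(1), of "\<lambda>i. (real_of_int (k $ i))\<^sup>2"] by (simp add: comp_def)
  finally show ?thesis by (simp add: knorm_eq_sqrt)
qed

lemma knorm_orbit: "p \<in> orbit k \<Longrightarrow> knorm p = knorm k"
  unfolding orbit_def using knorm_Oh by blast

lemma knorm_ge_1:
  assumes "k \<noteq> 0"
  shows "1 \<le> knorm k"
proof -
  obtain i where "k $ i \<noteq> 0" using assms by (metis vec_eq_iff zero_index)
  then have "1 \<le> \<bar>rvec k $ i\<bar>" by (simp add: rvec_def)
  also have "\<dots> \<le> knorm k" unfolding knorm_def by (rule component_le_norm_cart)
  finally show ?thesis .
qed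

lemma knorm_zero [simp]: "knorm 0 = 0"
  by (simp add: knorm_def rvec_def vec_eq_iff zero_vec_def)

lemma Orbits_nonzero:
  assumes "\<beta> \<in> Orbits N" "p \<in> \<beta>"
  shows "p \<noteq> 0"
proof -
  obtain b where "b \<in> Lambda N" "\<beta> = orbit b" using assms(1) unfolding Orbits_def by blast
  then have "1 \<le> knorm p" using assms(2) knorm_orbit knorm_ge_1 by (auto simp: Lambda_def)
  then show ?thesis by auto
qed

lemma knorm_Lambda_le:
  assumes "k \<in> Lambda N"
  shows "knorm k \<le> 3 * real N"
proof -
  have "knorm k \<le> (\<Sum>i\<in>UNIV. \<bar>rvec k $ i\<bar>)" unfolding knorm_def by (rule norm_le_l1_cart)
  also have "\<dots> \<le> (\<Sum>i\<in>(UNIV :: 3 set). real N)"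
    using assms by (intro sum_mono) (simp add: rvec_def Lambda_def, metis of_int_le_iff of_int_abs of_int_of_nat_eq)
  finally show ?thesis by simp
qed

lemma finite_Lambda: "finite (Lambda N)"
proof (rule finite_subset)
  show "Lambda N \<subseteq> vec_lambda ` (UNIV \<rightarrow>\<^sub>E {-int N..int N})"
  proof
    fix k assume "k \<in> Lambda N"
    then have bound: "\<bar>k $ i\<bar> \<le> int N" for i by (simp add: Lambda_def)
    have "k $ i \<in> {-int N..int N}" for i using bound[of i] by (auto simp: abs_le_iff)
    then have "(\<lambda>i. k $ i) \<in> UNIV \<rightarrow>\<^sub>E {-int N..int N}" by (simp add: PiE_iff)
    then show "k \<in> vec_lambda ` (UNIV \<rightarrow>\<^sub>E {-int N..int N})" by (intro image_eqI) auto
  qed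
qed (intro finite_imageI finite_PiE; simp)

lemma finite_Orbits: "finite (Orbits N)"
  by (simp add: Orbits_def finite_Lambda)

definition vcnj :: "complex ^ 3 \<Rightarrow> complex ^ 3" where
  "vcnj a = (\<chi> j. cnj (a $ j))"

lemma norm_vcnj [simp]: "norm (vcnj a) = norm a"
  by (simp add: vcnj_def norm_vec_def)

lemma norm_cvec [simp]: "norm (cvec k) = knorm k"
  by (simp add: norm_vec_def knorm_def cvec_def rvec_def)

lemma bdot_vcnj_cvec: "bdot (vcnj a) (cvec k) = cnj (bdot (cvec k) a)"
  by (simp add: bdot_def vcnj_def cvec_def mult.commute)

lemma bdot_scale_right: "bdot a (c *s b) = c * bdot a b"
  by (simp add: bdot_def sum_distrib_left mult.left_commute)

lemma bdot_diff_right: "bdot a (b - c) = bdot a b - bdot a c"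
  by (simp add: bdot_def algebra_simps sum_subtractf)

lemma norm_bdot_le: "norm (bdot a b) \<le> norm a * norm b"
proof -
  have "norm (bdot a b) \<le> (\<Sum>j\<in>UNIV. norm (a $ j) * norm (b $ j))"
    unfolding bdot_def by (rule order_trans[OF norm_sum]) (simp add: norm_mult)
  also have "\<dots> = (\<chi> j. norm (a $ j)) \<bullet> (\<chi> j. norm (b $ j))"
    by (simp add: inner_vec_def)
  also have "\<dots> \<le> norm (\<chi> j. norm (a $ j)) * norm (\<chi> j. norm (b $ j))"
    by (rule norm_cauchy_schwarz)
  also have "\<dots> = norm a * norm b"
    by (simp add: norm_vec_def)
  finally show ?thesis .
qed

lemma bdot_vcnj_leray:
  assumes "bdot (cvec k) a = 0"
  shows "bdot (vcnj a) (leray k w) = bdot (vcnj a) w"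
  using assms by (simp add: leray_def bdot_diff_right bdot_scale_right bdot_vcnj_cvec)

definition triad :: "coeffs \<Rightarrow> lat \<Rightarrow> lat \<Rightarrow> real" where
  "triad u k p = (knorm k)\<^sup>2 *
     Re (bdot (vcnj (u k)) (- \<i> *s leray k (bdot (u p) (u (k - p)) *s cvec (k - p))))"

lemma Mab_eq_triad:
  "Mab N u \<alpha> \<beta> = (\<Sum>k\<in>\<alpha>. \<Sum>p\<in>{p \<in> \<beta>. k - p \<in> Lambda N}. triad u k p) / real (card \<alpha>)"
  by (simp add: Mab_def triad_def vcnj_def)

lemma abs_triad_le:
  assumes "bdot (cvec k) (u k) = 0"
  shows "\<bar>triad u k p\<bar> \<le> (knorm k)\<^sup>2 * norm (u k) * (norm (u p) * (knorm (k - p) * norm (u (k - p))))"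
proof -
  let ?c = "bdot (u p) (u (k - p))"
  have "bdot (vcnj (u k)) (- \<i> *s leray k (?c *s cvec (k - p)))
      = - \<i> * ?c * bdot (vcnj (u k)) (cvec (k - p))"
    by (simp only: bdot_scale_right bdot_vcnj_leray[OF assms] mult.assoc)
  then have "norm (bdot (vcnj (u k)) (- \<i> *s leray k (?c *s cvec (k - p))))
      = norm ?c * norm (bdot (vcnj (u k)) (cvec (k - p)))"
    by (simp add: norm_mult)
  also have "\<dots> \<le> (norm (u p) * norm (u (k - p))) * (norm (u k) * knorm (k - p))"
    using norm_bdot_le[of "u p" "u (k - p)"] norm_bdot_le[of "vcnj (u k)" "cvec (k - p)"]
    by (simp add: mult_mono)
  finally show ?thesis
    unfolding triad_def abs_mult
    by (intro mult_left_mono[THEN order_trans[OF _ eq_refl]] order_trans[OF abs_Re_le_cmod])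
       (auto simp: mult_ac)
qed

lemma Hs_term_nonneg: "0 \<le> Hs_term s u k"
  by (simp add: Hs_term_def)

lemma Hs_norm_nonneg: "0 \<le> Hs_norm s u"
  by (simp add: Hs_norm_def infsum_nonneg Hs_term_nonneg)

lemma Hs_term_mono:
  assumes "k \<noteq> 0" "t \<le> s"
  shows "Hs_term t u k \<le> Hs_term s u k"
  unfolding Hs_term_def using assms knorm_ge_1[OF assms(1)]
  by (intro mult_right_mono powr_mono) auto

lemma Hs_term_0: "k \<noteq> 0 \<Longrightarrow> Hs_term 0 u k = (norm (u k))\<^sup>2"
  using knorm_ge_1[of k] by (simp add: Hs_term_def)

lemma Hs_term_1: "k \<noteq> 0 \<Longrightarrow> Hs_term 1 u k = (knorm k * norm (u k))\<^sup>2"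
  using knorm_ge_1[of k] by (simp add: Hs_term_def power_mult_distrib)

lemma sum_Hs_term_le:
  assumes "in_Hs s u" "finite F" "0 \<notin> F" "t \<le> s"
  shows "sum (Hs_term t u) F \<le> (Hs_norm s u)\<^sup>2"
proof -
  have "sum (Hs_term t u) F \<le> sum (Hs_term s u) F"
    using assms by (intro sum_mono Hs_term_mono) auto
  also have "\<dots> = infsum (Hs_term s u) F"
    using assms(2) by simp
  also have "\<dots> \<le> infsum (Hs_term s u) (UNIV - {0})"
    using assms by (intro infsum_mono_neutral) (auto simp: in_Hs_def Hs_term_nonneg)
  also have "\<dots> = (Hs_norm s u)\<^sup>2"
    by (simp add: Hs_norm_def infsum_nonneg Hs_term_nonneg)
  finally show ?thesis .
qed

lemma coefficient_le_Hs_norm: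
  assumes "in_Hs s u" "k \<noteq> 0"
  shows "knorm k powr s * norm (u k) \<le> Hs_norm s u"
proof -
  have "(knorm k powr s * norm (u k))\<^sup>2 = Hs_term s u k"
    by (simp add: Hs_term_def power_mult_distrib powr_powr[symmetric] mult.commute
        flip: powr_realpow)
  also have "\<dots> \<le> (Hs_norm s u)\<^sup>2"
    using sum_Hs_term_le[of s u "{k}" s] assms by simp
  finally show ?thesis
    using Hs_norm_nonneg by (rule power2_le_imp_le)
qed

lemma convolution_le_Hs_norm:
  assumes "in_Hs s u" "1 \<le> s" "finite G" "\<And>p. p \<in> G \<Longrightarrow> p \<noteq> 0 \<and> k - p \<noteq> 0"
  shows "(\<Sum>p\<in>G. norm (u p) * (knorm (k - p) * norm (u (k - p)))) \<le> (Hs_norm s u)\<^sup>2"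
proof -
  have "(\<Sum>p\<in>G. norm (u p) * (knorm (k - p) * norm (u (k - p))))
      \<le> (\<Sum>p\<in>G. (Hs_term 0 u p + Hs_term 1 u (k - p)) / 2)"
  proof (rule sum_mono)
    fix p assume "p \<in> G"
    then show "norm (u p) * (knorm (k - p) * norm (u (k - p))) \<le> (Hs_term 0 u p + Hs_term 1 u (k - p)) / 2"
      using assms(4) sum_squares_bound[of "norm (u p)" "knorm (k - p) * norm (u (k - p))"]
      by (simp add: Hs_term_0 Hs_term_1)
  qed
  also have "\<dots> = (sum (Hs_term 0 u) G + sum (Hs_term 1 u) ((\<lambda>p. k - p) ` G)) / 2"
    by (simp add: sum.distrib sum.reindex inj_on_def flip: sum_divide_distrib)
  also have "\<dots> \<le> (Hs_norm s u)\<^sup>2"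
    using assms sum_Hs_term_le[of s u G 0] sum_Hs_term_le[of s u "(\<lambda>p. k - p) ` G" 1]
    by fastforce
  finally show ?thesis .
qed

lemma triad_sum_le:
  assumes "bdot (cvec k) (u k) = 0" "in_Hs s u" "1 \<le> s" "k \<noteq> 0" "finite G"
    "\<And>p. p \<in> G \<Longrightarrow> p \<noteq> 0 \<and> k - p \<noteq> 0"
  shows "(\<Sum>p\<in>G. \<bar>triad u k p\<bar>) \<le> Hs_norm s u ^ 3 * knorm k powr (2 - s)"
proof -
  have k_pos: "0 < knorm k" using knorm_ge_1[OF assms(4)] by simp
  have "(knorm k)\<^sup>2 * norm (u k) = knorm k powr (2 - s) * (knorm k powr s * norm (u k))"
    using k_pos by (simp add: mult.assoc[symmetric] flip: powr_add)
  also have "\<dots> \<le> knorm k powr (2 - s) * Hs_norm s u"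
    using assms(2,4) by (intro mult_left_mono coefficient_le_Hs_norm) auto
  finally have coefficient: "(knorm k)\<^sup>2 * norm (u k) \<le> knorm k powr (2 - s) * Hs_norm s u" .
  have "(\<Sum>p\<in>G. \<bar>triad u k p\<bar>)
      \<le> (\<Sum>p\<in>G. (knorm k)\<^sup>2 * norm (u k) * (norm (u p) * (knorm (k - p) * norm (u (k - p)))))"
    using assms(1) by (intro sum_mono abs_triad_le)
  also have "\<dots> = (knorm k)\<^sup>2 * norm (u k) * (\<Sum>p\<in>G. norm (u p) * (knorm (k - p) * norm (u (k - p))))"
    by (simp add: sum_distrib_left)
  also have "\<dots> \<le> (knorm k)\<^sup>2 * norm (u k) * (Hs_norm s u)\<^sup>2"
    using assms by (intro mult_left_mono convolution_le_Hs_norm) auto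
  also have "\<dots> \<le> knorm k powr (2 - s) * Hs_norm s u * (Hs_norm s u)\<^sup>2"
    using coefficient by (rule mult_right_mono) simp
  finally show ?thesis
    by (simp add: power3_eq_cube power2_eq_square mult_ac)
qed

lemma finite_shifted_Lambda: "finite {p. k - p \<in> Lambda N}"
proof -
  have "{p. k - p \<in> Lambda N} = (\<lambda>q. k - q) ` Lambda N"
    by (force simp: image_iff)
  then show ?thesis using finite_Lambda by simp
qed

lemma sum_abs_Mab_le:
  "(\<Sum>\<beta>\<in>Orbits N. \<bar>Mab N u \<alpha> \<beta>\<bar>)
     \<le> (\<Sum>k\<in>\<alpha>. \<Sum>p\<in>{p \<in> \<Union>(Orbits N). k - p \<in> Lambda N}. \<bar>triad u k p\<bar>) / real (card \<alpha>)"
proof -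
  define A where "A k \<beta> = {p \<in> \<beta>. k - p \<in> Lambda N}" for k and \<beta> :: "lat set"
  have merge: "(\<Sum>\<beta>\<in>Orbits N. \<Sum>p\<in>A k \<beta>. \<bar>triad u k p\<bar>)
      = (\<Sum>p\<in>{p \<in> \<Union>(Orbits N). k - p \<in> Lambda N}. \<bar>triad u k p\<bar>)" for k
  proof -
    have "finite (A k \<beta>)" for \<beta>
      by (rule finite_subset[OF _ finite_shifted_Lambda[of k N]]) (auto simp: A_def)
    then have "(\<Sum>\<beta>\<in>Orbits N. \<Sum>p\<in>A k \<beta>. \<bar>triad u k p\<bar>) = (\<Sum>p\<in>\<Union>(A k ` Orbits N). \<bar>triad u k p\<bar>)"
      using Orbits_disjoint[of _ N] unfolding A_def
      by (intro sum.UNION_disjoint[symmetric] finite_Orbits) blast+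
    also have "\<Union>(A k ` Orbits N) = {p \<in> \<Union>(Orbits N). k - p \<in> Lambda N}"
      by (auto simp: A_def)
    finally show ?thesis .
  qed
  have "\<bar>Mab N u \<alpha> \<beta>\<bar> \<le> (\<Sum>k\<in>\<alpha>. \<Sum>p\<in>A k \<beta>. \<bar>triad u k p\<bar>) / real (card \<alpha>)" for \<beta>
    unfolding Mab_eq_triad A_def abs_divide abs_of_nat
    by (intro divide_right_mono order_trans[OF sum_abs] sum_mono sum_abs) simp_all
  then have "(\<Sum>\<beta>\<in>Orbits N. \<bar>Mab N u \<alpha> \<beta>\<bar>)
      \<le> (\<Sum>\<beta>\<in>Orbits N. \<Sum>k\<in>\<alpha>. \<Sum>p\<in>A k \<beta>. \<bar>triad u k p\<bar>) / real (card \<alpha>)"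
    unfolding sum_divide_distrib by (rule sum_mono)
  also have "\<dots> = (\<Sum>k\<in>\<alpha>. \<Sum>\<beta>\<in>Orbits N. \<Sum>p\<in>A k \<beta>. \<bar>triad u k p\<bar>) / real (card \<alpha>)"
    by (subst sum.swap) (rule refl)
  finally show ?thesis by (simp only: merge)
qed

lemma Mab_row_sum_le:
  assumes "\<And>k. bdot (cvec k) (u k) = 0" and "in_Hs s u" "1 \<le> s"
    and "\<alpha> \<in> Orbits N" "k\<^sub>\<alpha> \<in> \<alpha>"
  shows "(\<Sum>\<beta>\<in>Orbits N. \<bar>Mab N u \<alpha> \<beta>\<bar>) \<le> Hs_norm s u ^ 3 * knorm k\<^sub>\<alpha> powr (2 - s)"
proof -
  define B where "B = Hs_norm s u ^ 3 * knorm k\<^sub>\<alpha> powr (2 - s)"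
  have "(\<Sum>p\<in>{p \<in> \<Union>(Orbits N). k - p \<in> Lambda N}. \<bar>triad u k p\<bar>) \<le> B" if "k \<in> \<alpha>" for k
  proof -
    obtain b where "\<alpha> = orbit b" using assms(4) unfolding Orbits_def by blast
    then have "knorm k = knorm k\<^sub>\<alpha>"
      using that assms(5) knorm_orbit by metis
    moreover have "finite {p \<in> \<Union>(Orbits N). k - p \<in> Lambda N}"
      using finite_shifted_Lambda by (rule finite_subset[rotated]) auto
    ultimately have "(\<Sum>p\<in>{p \<in> \<Union>(Orbits N). k - p \<in> Lambda N}. \<bar>triad u k p\<bar>)
        \<le> Hs_norm s u ^ 3 * knorm k powr (2 - s)"
      using assms Orbits_nonzero that by (intro triad_sum_le) (auto simp: Lambda_def)
    then show ?thesis
      using \<open>knorm k = knorm k\<^sub>\<alpha>\<close> by (simp add: B_def)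
  qed
  then have "(\<Sum>\<beta>\<in>Orbits N. \<bar>Mab N u \<alpha> \<beta>\<bar>) \<le> (\<Sum>k\<in>\<alpha>. B) / real (card \<alpha>)"
    by (intro order_trans[OF sum_abs_Mab_le] divide_right_mono sum_mono) auto
  also have "\<dots> \<le> B"
    using Hs_norm_nonneg by (simp add: B_def)
  finally show ?thesis unfolding B_def .
qed

lemma knorm_powr_Lambda_le:
  assumes "k \<in> Lambda N" "1 \<le> s"
  shows "knorm k powr (2 - s) \<le> (if 2 < s then 3 else 3 * real N powr (6 - 3 * s))"
proof -
  have k1: "1 \<le> knorm k" using assms(1) knorm_ge_1 by (simp add: Lambda_def)
  have kN: "knorm k \<le> 3 * real N" using assms(1) by (rule knorm_Lambda_le)
  show ?thesis
  proof (cases "2 < s")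
    case True
    then have "knorm k powr (2 - s) \<le> knorm k powr 0" using k1 by (intro powr_mono) auto
    then show ?thesis using True k1 by simp
  next
    case False
    have "N \<noteq> 0" using k1 kN by auto
    then have N1: "1 \<le> real N" by simp
    have "knorm k powr (2 - s) \<le> (3 * real N) powr (2 - s)"
      using False k1 kN by (intro powr_mono2) auto
    also have "\<dots> = 3 powr (2 - s) * real N powr (2 - s)"
      by (simp add: powr_mult)
    also have "\<dots> \<le> 3 powr 1 * real N powr (6 - 3 * s)"
      using False N1 assms(2) by (intro mult_mono powr_mono) auto
    finally show ?thesis using False by simp
  qed
qed

theorem theorem6p4:
  fixes s M :: real
  assumes "3 / 2 < s" and "s < 3" and "0 \<le> M"
  shows "(\<exists>C > 0. \<forall>N::nat. N \<ge> 1 \<longrightarrow>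
            (\<forall>u. mean_zero_div_free_real u \<and> in_Hs s u \<and> Hs_norm s u \<le> M \<longrightarrow>
              (\<forall>\<alpha>\<in>Orbits N. \<forall>k\<^sub>\<alpha>\<in>\<alpha>.
                 (\<Sum>\<beta>\<in>Orbits N. \<bar>Mab N u \<alpha> \<beta>\<bar>)
                   \<le> C * M ^ 3 * (knorm k\<^sub>\<alpha> powr (2 - s) + knorm k\<^sub>\<alpha> powr (6 - 3 * s)))))
       \<and> (\<exists>C > 0. \<forall>N::nat. N \<ge> 1 \<longrightarrow>
            (\<forall>u. mean_zero_div_free_real u \<and> in_Hs s u \<and> Hs_norm s u \<le> M \<longrightarrow>
              (SUP \<alpha>\<in>Orbits N. \<Sum>\<beta>\<in>Orbits N. \<bar>Mab N u \<alpha> \<beta>\<bar>)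
                \<le> (if 2 < s then C * M ^ 3 else C * M ^ 3 * real N powr (6 - 3 * s))))"
proof -
  have s1: "1 \<le> s" using assms(1) by simp
  have row: "(\<Sum>\<beta>\<in>Orbits N. \<bar>Mab N u \<alpha> \<beta>\<bar>) \<le> M ^ 3 * knorm k powr (2 - s)"
    if "mean_zero_div_free_real u \<and> in_Hs s u \<and> Hs_norm s u \<le> M" "\<alpha> \<in> Orbits N" "k \<in> \<alpha>"
    for N u \<alpha> k
  proof -
    have "(\<Sum>\<beta>\<in>Orbits N. \<bar>Mab N u \<alpha> \<beta>\<bar>) \<le> Hs_norm s u ^ 3 * knorm k powr (2 - s)"
      using that s1 by (intro Mab_row_sum_le) (auto simp: mean_zero_div_free_real_def)
    also have "\<dots> \<le> M ^ 3 * knorm k powr (2 - s)"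
      using that Hs_norm_nonneg by (intro mult_right_mono power_mono) auto
    finally show ?thesis .
  qed
  have "(\<Sum>\<beta>\<in>Orbits N. \<bar>Mab N u \<alpha> \<beta>\<bar>)
      \<le> 1 * M ^ 3 * (knorm k powr (2 - s) + knorm k powr (6 - 3 * s))"
    if "mean_zero_div_free_real u \<and> in_Hs s u \<and> Hs_norm s u \<le> M" "\<alpha> \<in> Orbits N" "k \<in> \<alpha>"
    for N u \<alpha> k
    using row[OF that] assms(3) by (simp add: order_trans[OF _ mult_left_mono])
  moreover have "(SUP \<alpha>\<in>Orbits N. \<Sum>\<beta>\<in>Orbits N. \<bar>Mab N u \<alpha> \<beta>\<bar>)
      \<le> (if 2 < s then 3 * M ^ 3 else 3 * M ^ 3 * real N powr (6 - 3 * s))"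
    if "1 \<le> N" "mean_zero_div_free_real u \<and> in_Hs s u \<and> Hs_norm s u \<le> M" for N u
  proof (rule cSUP_least)
    have "(\<chi> i. 1) \<in> Lambda N" using that(1) by (auto simp: Lambda_def vec_eq_iff)
    then show "Orbits N \<noteq> {}" by (auto simp: Orbits_def)
  next
    fix \<alpha> assume "\<alpha> \<in> Orbits N"
    then obtain k where k: "k \<in> Lambda N" "\<alpha> = orbit k" by (auto simp: Orbits_def)
    have "(\<Sum>\<beta>\<in>Orbits N. \<bar>Mab N u \<alpha> \<beta>\<bar>) \<le> M ^ 3 * knorm k powr (2 - s)"
      using row[OF that(2) \<open>\<alpha> \<in> Orbits N\<close>] k orbit_refl by simp
    also have "\<dots> \<le> M ^ 3 * (if 2 < s then 3 else 3 * real N powr (6 - 3 * s))"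
      by (rule mult_left_mono[OF knorm_powr_Lambda_le[OF k(1) s1]]) (simp add: assms(3))
    finally show "(\<Sum>\<beta>\<in>Orbits N. \<bar>Mab N u \<alpha> \<beta>\<bar>)
        \<le> (if 2 < s then 3 * M ^ 3 else 3 * M ^ 3 * real N powr (6 - 3 * s))"
      by (simp add: mult_ac split: if_splits)
  qed
  ultimately show ?thesis
    by (intro conjI exI[of _ 1] exI[of _ 3]) auto
qed

end
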